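(* Let $f(x) = x^5 + a_4x^4 + a_3x^3 + a_2x^2 + a_1x + a_0$ be a real polynomial. Define $u_2 = \frac{3}{10}a_3 - \frac{3}{25}a_4^2$, $u_3 = \frac{2}{125}a_4^3 - \frac{3}{50}a_3a_4 + \frac{1}{10}a_2$, $u_4 = -\frac{3}{625}a_4^4 + \frac{3}{125}a_4^2a_3 - \frac{2}{25}a_4a_2 + \frac15 a_1$. If $u_3 = 0$, for $i_1,i_2 \in \{+1,-1\}$ let $x_{i_1,i_2} = i_1\sqrt{-u_2 + i_2\sqrt{u_2^2 - u_4}}$. If $u_3 \neq 0$, let $v_2 = -\frac{u_2^2}{3} - u_4$, $v_3 = \frac{2u_2u_4}{3} - \frac{2u_2^3}{27} - 2u_3^2$, let $C$ be a complex third root of $-v_3$ if $v_2 = 0$ and of $\frac12\left(-v_3 + \sqrt{v_3^2 + \frac{4}{27}v_2^3}\right)$ if $v_2 \neq 0$, let $y = C - \frac{v_2}{3C} - \frac{2u_2}{3}$, and let $x_{i_1,i_2} = \frac{i_1\sqrt{2y} + i_2\sqrt{-4u_2 - 2y - i_1\frac{8u_3}{\sqrt{2y}}}}{2}$. Then the four numbers $x_{i_1,i_2} - \frac{a_4}{5}$, $i_1,i_2 \in \{+1,-1\}$, are the four roots of $f'(x)$. Assume they are real, sort them as $\beta_4 \leq \beta_3 \leq \beta_2 \leq \beta_1$, let $F(x) = x^5 + a_4x^4 + a_3x^3 + a_2x^2 + a_1x$ (so $f = F + a_0$), and set $\lambda_1 = \max\{F(\beta_1),F(\beta_3)\}$,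 $\lambda_2 = \min\{F(\beta_2),F(\beta_4)\}$. Consider $(\dagger\dagger\dagger)$: $-\lambda_2 \leq a_0 \leq -\lambda_1$. Then: (1) all complex roots of $f(x)$ are real and non-negative if and only if all complex roots of $f'(x)$ are real and non-negative, $a_0 \leq 0$ and $(\dagger\dagger\dagger)$ holds; (2) all complex roots of $f(x)$ are real and positive if and only if all complex roots of $f'(x)$ are real and positive, $a_0 < 0$ and $(\dagger\dagger\dagger)$ holds.
   Context: Square roots and third roots appearing above denote arbitrary complex roots (the resulting set of four numbers $x_{i_1,i_2}$ does not depend on these choices). *)

theory Defs
  imports "HOL-Computational_Algebra.Polynomial" Complex_Main
begin

definition quintic :: "real \<Rightarrow> real \<Rightarrow> real \<Rightarrow> real \<Rightarrow> real \<Rightarrow> real poly" where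
  "quintic a4 a3 a2 a1 a0 = [:a0, a1, a2, a3, a4, 1:]"

definition Fq :: "real \<Rightarrow> real \<Rightarrow> real \<Rightarrow> real \<Rightarrow> real \<Rightarrow> real" where
  "Fq a4 a3 a2 a1 x = x^5 + a4 * x^4 + a3 * x^3 + a2 * x^2 + a1 * x"

definition u2 :: "real \<Rightarrow> real \<Rightarrow> real" where
  "u2 a4 a3 = 3/10 * a3 - 3/25 * a4^2"

definition u3 :: "real \<Rightarrow> real \<Rightarrow> real \<Rightarrow> real" where
  "u3 a4 a3 a2 = 2/125 * a4^3 - 3/50 * a3 * a4 + 1/10 * a2"

definition u4 :: "real \<Rightarrow> real \<Rightarrow> real \<Rightarrow> real \<Rightarrow> real" where
  "u4 a4 a3 a2 a1 = - 3/625 * a4^4 + 3/125 * a4^2 * a3 - 2/25 * a4 * a2 + 1/5 * a1"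

definition v2 :: "real \<Rightarrow> real \<Rightarrow> real \<Rightarrow> real \<Rightarrow> real" where
  "v2 a4 a3 a2 a1 = - ((u2 a4 a3)^2 / 3) - u4 a4 a3 a2 a1"

definition v3 :: "real \<Rightarrow> real \<Rightarrow> real \<Rightarrow> real \<Rightarrow> real" where
  "v3 a4 a3 a2 a1 = 2 * u2 a4 a3 * u4 a4 a3 a2 a1 / 3 - 2 * (u2 a4 a3)^3 / 27
                    - 2 * (u3 a4 a3 a2)^2"

text \<open>x :: sign \<Rightarrow> sign \<Rightarrow> complex (signs i1, i2 in {1,-1}) is obtained from the
  closed formula of the paper for SOME admissible choice of the complex square and
  cube roots occurring in it (each root is an arbitrary complex root).\<close>
definition root_formula_choice ::
  "real \<Rightarrow> real \<Rightarrow> real \<Rightarrow> real \<Rightarrow> (real \<Rightarrow> real \<Rightarrow> complex) \<Rightarrow> bool" where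
  "root_formula_choice a4 a3 a2 a1 x \<longleftrightarrow>
     (let U2 = complex_of_real (u2 a4 a3); U3 = complex_of_real (u3 a4 a3 a2);
          U4 = complex_of_real (u4 a4 a3 a2 a1);
          V2 = complex_of_real (v2 a4 a3 a2 a1); V3 = complex_of_real (v3 a4 a3 a2 a1) in
     (u3 a4 a3 a2 = 0 \<longrightarrow>
        (\<exists>s r. s^2 = U2^2 - U4 \<and>
               (\<forall>i2\<in>{1,-1}. (r i2)^2 = - U2 + of_real i2 * s) \<and>
               (\<forall>i1\<in>{1,-1}. \<forall>i2\<in>{1,-1}. x i1 i2 = of_real i1 * r i2))) \<and>
     (u3 a4 a3 a2 \<noteq> 0 \<longrightarrow>
        (\<exists>d C w q. d^2 = V3^2 + 4/27 * V2^3 \<and>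
               C^3 = (if v2 a4 a3 a2 a1 = 0 then - V3 else (- V3 + d) / 2) \<and>
               (let y = C - V2 / (3 * C) - 2 * U2 / 3 in
                 w^2 = 2 * y \<and>
                 (\<forall>i1\<in>{1,-1}. (q i1)^2 = - 4 * U2 - 2 * y - of_real i1 * (8 * U3 / w)) \<and>
                 (\<forall>i1\<in>{1,-1}. \<forall>i2\<in>{1,-1}.
                    x i1 i2 = (of_real i1 * w + of_real i2 * q i1) / 2)))))"

end

theory Submission
  imports Defs "HOL-Computational_Algebra.Fundamental_Theorem_Algebra"
begin

(* Substituting x = t - a4/5 turns f'/5 into the depressed quartic t^4 + 2 u2 t^2 + 4 u3 t + u4; the
   numbers x_{i1,i2} are the roots of Ferrari's factorisation of it, where y is a root of the resolvent
   cubic obtained from Cardano's formula.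

   If f has only real roots r5 <= ... <= r1, Rolle's theorem and a count of multiplicities show that they
   interlace the critical points, r5 <= \<beta>4 <= r4 <= ... <= \<beta>1 <= r1, so the values f(\<beta>i) alternate
   in sign; as f = F + a0, these sign conditions are exactly (+++). Conversely, alternating signs give five
   interlacing real roots by the intermediate value theorem, and the same multiplicity count shows that
   they are all the roots of f. Finally f increases on (-oo, \<beta>4], so the smallest root is non-negative
   (positive) iff \<beta>4 >= 0 and f(0) = a0 <= 0 (\<beta>4 > 0 and a0 < 0). *)

section \<open>The root formula for the derivative\<close>

lemma cardano_depressed_cubic:
  fixes V2 V3 C d :: "'a::field_char_0"
  assumes d: "d^2 = V3^2 + 4/27 * V2^3"
    and C: "C^3 = (if V2 = 0 then - V3 else (- V3 + d) / 2)"
  shows "(C - V2 / (3 * C))^3 + V2 * (C - V2 / (3 * C)) + V3 = 0"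
proof (cases "V2 = 0")
  case False
  hence C3: "C^3 = (- V3 + d) / 2" using C by simp
  have "C \<noteq> 0"
  proof
    assume "C = 0"
    hence "V2^3 = 0" using C3 d by (simp add: power2_eq_square)
    thus False using False by simp
  qed
  have "(C - V2 / (3 * C))^3 + V2 * (C - V2 / (3 * C)) + V3 =
    (27 * (C^3)^2 + 27 * V3 * C^3 - V2^3) / (27 * C^3)"
    using \<open>C \<noteq> 0\<close> by (simp add: field_simps power3_eq_cube power2_eq_square)
  also have "27 * (C^3)^2 + 27 * V3 * C^3 - V2^3 = 0"
    unfolding C3 using d by (simp add: field_simps power2_eq_square)
  finally show ?thesis by simp
qed (use C in simp)

lemma resolvent_cubic_root:
  fixes U2 U3 U4 C d :: "'a::field_char_0"
  defines "V2 \<equiv> - (U2^2 / 3) - U4" and "V3 \<equiv> 2 * U2 * U4 / 3 - 2 * U2^3 / 27 - 2 * U3^2"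
  assumes "d^2 = V3^2 + 4/27 * V2^3" and "C^3 = (if V2 = 0 then - V3 else (- V3 + d) / 2)"
  defines "y \<equiv> C - V2 / (3 * C) - 2 * U2 / 3"
  shows "y^3 + 2 * U2 * y^2 + (U2^2 - U4) * y - 2 * U3^2 = 0"
proof -
  define z where "z = C - V2 / (3 * C)"
  have "y^3 + 2 * U2 * y^2 + (U2^2 - U4) * y - 2 * U3^2 = z^3 + V2 * z + V3"
    unfolding y_def z_def[symmetric] unfolding V2_def V3_def by algebra
  also have "\<dots> = 0" unfolding z_def by (rule cardano_depressed_cubic[OF assms(3,4)])
  finally show ?thesis .
qed

lemma ferrari_quartic_factorization:
  fixes U2 U3 U4 y w q1 q2 t :: "'a::field_char_0"
  assumes "y^3 + 2 * U2 * y^2 + (U2^2 - U4) * y - 2 * U3^2 = 0" and "w^2 = 2 * y" and "w \<noteq> 0"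
    and "q1^2 = - 4 * U2 - 2 * y - 8 * U3 / w" and "q2^2 = - 4 * U2 - 2 * y + 8 * U3 / w"
  shows "(t - (w + q1) / 2) * (t - (w - q1) / 2) * (t - (- w + q2) / 2) * (t - (- w - q2) / 2) =
    t^4 + 2 * U2 * t^2 + 4 * U3 * t + U4"
proof -
  define k where "k = 8 * U3 / w"
  have "k * w = 8 * U3" "w * inverse w = 1" using \<open>w \<noteq> 0\<close> by (simp_all add: k_def)
  with assms(1,2,4,5) show ?thesis unfolding k_def[symmetric] by algebra
qed

lemma depressed_quartic_root_formula:
  assumes "root_formula_choice a4 a3 a2 a1 x"
  shows "(t - x 1 1) * (t - x 1 (-1)) * (t - x (-1) 1) * (t - x (-1) (-1)) =
    t^4 + 2 * of_real (u2 a4 a3) * t^2 + 4 * of_real (u3 a4 a3 a2) * t + of_real (u4 a4 a3 a2 a1)"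
proof -
  define U2 U3 U4 where "U2 = complex_of_real (u2 a4 a3)" and "U3 = complex_of_real (u3 a4 a3 a2)"
    and "U4 = complex_of_real (u4 a4 a3 a2 a1)"
  show ?thesis
  proof (cases "u3 a4 a3 a2 = 0")
    case True
    then obtain s r where "s^2 = U2^2 - U4" and r: "\<forall>i\<in>{1,-1}. (r i)^2 = - U2 + of_real i * s"
      and "\<forall>i1\<in>{1,-1}. \<forall>i2\<in>{1,-1}. x i1 i2 = of_real i1 * r i2"
      using assms unfolding root_formula_choice_def Let_def U2_def U4_def by auto
    moreover have "(r 1)^2 = - U2 + s" "(r (-1))^2 = - U2 - s" using r by auto
    ultimately show ?thesis unfolding U2_def U4_def True by simp algebra
  next
    case False
    define V2 V3 where "V2 = - (U2^2 / 3) - U4" and "V3 = 2 * U2 * U4 / 3 - 2 * U2^3 / 27 - 2 * U3^2"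
    have V: "complex_of_real (v2 a4 a3 a2 a1) = V2" "complex_of_real (v3 a4 a3 a2 a1) = V3"
      by (simp_all add: V2_def V3_def U2_def U3_def U4_def v2_def v3_def)
    hence "v2 a4 a3 a2 a1 = 0 \<longleftrightarrow> V2 = 0" by auto
    obtain d C w q where d: "d^2 = V3^2 + 4/27 * V2^3"
      and C: "C^3 = (if V2 = 0 then - V3 else (- V3 + d) / 2)"
      and w: "w^2 = 2 * (C - V2 / (3 * C) - 2 * U2 / 3)"
      and q: "\<forall>i\<in>{1,-1}. (q i)^2 = - 4 * U2 - 2 * (C - V2 / (3 * C) - 2 * U2 / 3)
                                     - of_real i * (8 * U3 / w)"
      and x: "\<forall>i1\<in>{1,-1}. \<forall>i2\<in>{1,-1}. x i1 i2 = (of_real i1 * w + of_real i2 * q i1) / 2"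
      using assms False \<open>v2 a4 a3 a2 a1 = 0 \<longleftrightarrow> V2 = 0\<close>
      unfolding root_formula_choice_def Let_def V U2_def U3_def U4_def by auto
    define y where "y = C - V2 / (3 * C) - 2 * U2 / 3"
    have res: "y^3 + 2 * U2 * y^2 + (U2^2 - U4) * y - 2 * U3^2 = 0"
      using resolvent_cubic_root[of d U2 U4 U3 C] d C unfolding y_def V2_def V3_def by simp
    have "U3 \<noteq> 0" using False by (simp add: U3_def)
    with res have "y \<noteq> 0" by auto
    hence "w \<noteq> 0" using w unfolding y_def[symmetric] by auto
    have "(q 1)^2 = - 4 * U2 - 2 * y - 8 * U3 / w" "(q (-1))^2 = - 4 * U2 - 2 * y + 8 * U3 / w"
      using q unfolding y_def[symmetric] by auto
    note ferrari = ferrari_quartic_factorization[OF res w[folded y_def] \<open>w \<noteq> 0\<close> this, of t]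
    have "x 1 1 = (w + q 1) / 2" "x 1 (-1) = (w - q 1) / 2"
      "x (-1) 1 = (- w + q (-1)) / 2" "x (-1) (-1) = (- w - q (-1)) / 2"
      using x by auto
    thus ?thesis using ferrari by (simp only: U2_def U3_def U4_def)
  qed
qed

lemma poly_pderiv_quintic_shift:
  "poly (pderiv (map_poly complex_of_real (quintic a4 a3 a2 a1 a0))) (t - of_real (a4 / 5)) =
   5 * (t^4 + 2 * of_real (u2 a4 a3) * t^2 + 4 * of_real (u3 a4 a3 a2) * t + of_real (u4 a4 a3 a2 a1))"
  by (simp add: quintic_def map_poly_pCons pderiv_pCons u2_def u3_def u4_def)
    (simp add: field_simps power2_eq_square power3_eq_cube power4_eq_xxxx)

lemma prod_sign_pairs:
  "(\<Prod>p\<in>{1,-1::real}\<times>{1,-1::real}. g p) =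
   g (1, 1) * g (1, -1) * g (-1, 1) * (g (-1, -1) :: 'a::comm_monoid_mult)"
proof -
  have "{1,-1::real}\<times>{1,-1::real} = {(1,1), (1,-1), (-1,1), (-1,-1)}" by auto
  thus ?thesis by (simp add: mult.assoc)
qed

lemma pderiv_quintic_root_formula:
  assumes "root_formula_choice a4 a3 a2 a1 x"
  shows "pderiv (map_poly complex_of_real (quintic a4 a3 a2 a1 a0)) =
    smult 5 (\<Prod>p\<in>{1,-1::real}\<times>{1,-1::real}. [:- (x (fst p) (snd p) - complex_of_real (a4 / 5)), 1:])"
proof (rule poly_eq_poly_eq_iff[THEN iffD1, OF ext])
  fix z :: complex
  define t where "t = z + of_real (a4 / 5)"
  have "poly (smult 5 (\<Prod>p\<in>{1,-1::real}\<times>{1,-1::real}.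
      [:- (x (fst p) (snd p) - complex_of_real (a4 / 5)), 1:])) z =
    5 * ((t - x 1 1) * (t - x 1 (-1)) * (t - x (-1) 1) * (t - x (-1) (-1)))"
  proof -
    have "poly [:- (u - of_real (a4 / 5)), 1:] z = t - u" for u by (simp add: t_def)
    thus ?thesis by (simp only: prod_sign_pairs poly_smult poly_mult fst_conv snd_conv)
  qed
  also have "\<dots> = poly (pderiv (map_poly complex_of_real (quintic a4 a3 a2 a1 a0))) z"
    using poly_pderiv_quintic_shift[of a4 a3 a2 a1 a0 t]
    by (simp add: depressed_quartic_root_formula[OF assms] t_def)
  finally show "poly (pderiv (map_poly complex_of_real (quintic a4 a3 a2 a1 a0))) z =
    poly (smult 5 (\<Prod>p\<in>{1,-1::real}\<times>{1,-1::real}.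
      [:- (x (fst p) (snd p) - complex_of_real (a4 / 5)), 1:])) z" ..
qed

section \<open>Products of linear factors\<close>

lemma prod_linear_nonzero: "(\<Prod>y\<leftarrow>ys. [:-y, 1:]) \<noteq> (0 :: 'a::idom poly)"
  by (auto simp: prod_list_zero_iff)

lemma proots_prod_linear: "proots (\<Prod>y\<leftarrow>ys. [:-y, 1:]) = mset (ys :: 'a::idom list)"
  by (induction ys) (simp_all del: mult_pCons_left add: proots_mult prod_linear_nonzero)

lemma degree_prod_linear: "degree (\<Prod>y\<leftarrow>ys. [:-y, 1:]) = length (ys :: 'a::idom list)"
  by (induction ys) (simp_all del: mult_pCons_left add: degree_mult_eq prod_linear_nonzero)

lemma lead_coeff_prod_linear: "lead_coeff (\<Prod>y\<leftarrow>ys. [:-y, 1:]) = (1 :: 'a::idom)"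
  by (induction ys) (simp_all del: mult_pCons_left add: lead_coeff_mult)

lemma poly_prod_linear: "poly (\<Prod>y\<leftarrow>ys. [:-y, 1:]) x = (\<Prod>y\<leftarrow>ys. x - y)"
  for x :: "'a::comm_ring_1"
  by (induction ys) (simp_all del: mult_pCons_left add: algebra_simps)

lemma prod_linear_dvd:
  fixes p :: "'a::idom poly"
  assumes "mset ys \<subseteq># proots p"
  shows "(\<Prod>y\<leftarrow>ys. [:-y, 1:]) dvd p"
  using assms
proof (induction ys arbitrary: p)
  case (Cons y ys)
  have "p \<noteq> 0" using Cons.prems by (intro notI) simp
  moreover have "y \<in># proots p" using Cons.prems by (simp add: insert_subset_eq_iff)
  ultimately have "poly p y = 0" by simp
  with \<open>p \<noteq> 0\<close> obtain q where p: "p = [:-y, 1:] * q" and "q \<noteq> 0"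
    by (metis dvdE mult_zero_right poly_eq_0_iff_dvd)
  have "mset ys \<subseteq># proots q"
    using Cons.prems unfolding p by (simp del: mult_pCons_left add: proots_mult \<open>q \<noteq> 0\<close>)
  thus ?case unfolding p by (simp del: mult_pCons_left add: Cons.IH)
qed simp

lemma eq_smult_prod_linear:
  fixes p :: "'a::idom poly"
  assumes "mset ys \<subseteq># proots p" and "degree p = length ys"
  shows "p = smult (lead_coeff p) (\<Prod>y\<leftarrow>ys. [:-y, 1:])"
proof -
  obtain q where p: "p = (\<Prod>y\<leftarrow>ys. [:-y, 1:]) * q"
    using prod_linear_dvd[OF assms(1)] by blast
  show ?thesis
  proof (cases "q = 0")
    case False
    hence "degree q = 0" using assms(2) unfolding p
      by (simp add: degree_mult_eq prod_linear_nonzero degree_prod_linear)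
    then obtain c where "q = [:c:]" by (rule degree_eq_zeroE)
    thus ?thesis unfolding p by (simp add: lead_coeff_mult lead_coeff_prod_linear)
  qed (simp add: p)
qed

lemma map_poly_of_real_mult:
  "map_poly of_real (p * q) =
   map_poly of_real p * (map_poly of_real q :: 'a::{idom, real_algebra_1} poly)"
  by (rule poly_eqI) (simp add: coeff_map_poly coeff_mult)

lemma map_poly_of_real_prod_linear:
  "map_poly of_real (\<Prod>y\<leftarrow>ys. [:-y, 1:]) =
   (\<Prod>y\<leftarrow>map of_real ys. [:-y, 1:] :: 'a::{idom, real_algebra_1} poly)"
  by (induction ys) (simp_all del: mult_pCons_left add: map_poly_of_real_mult map_poly_pCons)

lemma pderiv_map_poly_of_real:
  "pderiv (map_poly of_real p) = (map_poly of_real (pderiv p) :: 'a::{idom, real_algebra_1} poly)"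
  by (rule poly_eqI) (simp add: coeff_pderiv coeff_map_poly)

lemma complex_roots_of_real_split:
  assumes "f = smult c (\<Prod>r\<leftarrow>rs. [:-r, 1:])" and "c \<noteq> 0"
  shows "poly (map_poly complex_of_real f) z = 0 \<longleftrightarrow> z \<in> complex_of_real ` set rs"
proof -
  have "map_poly complex_of_real f = smult (of_real c) (\<Prod>y\<leftarrow>map of_real rs. [:-y, 1:])"
    unfolding assms(1) map_poly_of_real_prod_linear[symmetric] by (simp add: map_poly_smult)
  hence "poly (map_poly complex_of_real f) z = of_real c * (\<Prod>y\<leftarrow>map of_real rs. z - y)"
    by (simp only: poly_smult poly_prod_linear)
  thus ?thesis using assms(2) by (auto simp: prod_list_zero_iff)
qed

lemma prod_linear_mset_cong:
  "mset xs = mset ys \<Longrightarrow> (\<Prod>x\<leftarrow>xs. [:-x, 1:]) = (\<Prod>y\<leftarrow>ys. [:-y, 1:] :: 'a::comm_ring_1 poly)"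
  by (metis mset_map prod_mset_prod_list)

lemma real_split_if_complex_roots_real:
  fixes f :: "real poly"
  assumes real_roots: "\<forall>z. poly (map_poly complex_of_real f) z = 0 \<longrightarrow> z \<in> \<real>"
  obtains rs where "sorted rs" and "f = smult (lead_coeff f) (\<Prod>r\<leftarrow>rs. [:-r, 1:])"
proof -
  define g where "g = map_poly complex_of_real f"
  obtain zs where zs: "mset zs = proots g" using ex_mset by blast
  have "z \<in> \<real>" if "z \<in> set zs" for z
  proof (cases "g = 0")
    case False
    with that zs have "poly g z = 0" by (metis set_count_proots mem_Collect_eq set_mset_mset)
    thus ?thesis using real_roots g_def by blast
  qed (use that zs in simp)
  hence "map (complex_of_real \<circ> Re) zs = zs" by (intro map_idI) simp
  define rs where "rs = sort (map Re zs)"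
  have "mset (map complex_of_real rs) = mset zs"
    by (metis rs_def mset_map mset_sort map_map \<open>map (complex_of_real \<circ> Re) zs = zs\<close>)
  have "g = smult (lead_coeff g) (\<Prod>z\<leftarrow>zs. [:-z, 1:])"
    using complex_poly_decompose_multiset[of g] by (metis zs mset_map prod_mset_prod_list)
  also have "\<dots> = map_poly complex_of_real (smult (lead_coeff f) (\<Prod>r\<leftarrow>rs. [:-r, 1:]))"
    using prod_linear_mset_cong[OF \<open>mset (map complex_of_real rs) = mset zs\<close>]
    by (simp add: g_def map_poly_smult map_poly_of_real_prod_linear degree_map_poly coeff_map_poly
        del: map_map)
  finally have "map_poly Re g = smult (lead_coeff f) (\<Prod>r\<leftarrow>rs. [:-r, 1:])"
    by (simp add: map_poly_map_poly comp_def)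
  moreover have "map_poly Re g = f"
    by (simp add: g_def map_poly_map_poly comp_def)
  ultimately show ?thesis using that[of rs] by (simp add: rs_def)
qed

section \<open>Interlacing of roots and critical points\<close>

(* Lists are increasing: interlacing [r5, r4, r3, r2, r1] [\<beta>4, \<beta>3, \<beta>2, \<beta>1] says
   r5 <= \<beta>4 <= r4 <= ... <= \<beta>1 <= r1. *)
fun interlacing :: "'a::order list \<Rightarrow> 'a list \<Rightarrow> bool" where
  "interlacing (r # r' # rs) (b # bs) \<longleftrightarrow> r \<le> b \<and> b \<le> r' \<and> interlacing (r' # rs) bs"
| "interlacing [r] [] \<longleftrightarrow> True"
| "interlacing _ _ \<longleftrightarrow> False"

lemma interlacing_length: "interlacing rs bs \<Longrightarrow> length rs = Suc (length bs)"
  by (induction rs bs rule: interlacing.induct) auto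

lemma interlacing_hd_le: "interlacing rs bs \<Longrightarrow> x \<in> set rs \<union> set bs \<Longrightarrow> hd rs \<le> x"
  by (induction rs bs rule: interlacing.induct) (auto intro: order_trans)

lemma interlacing_sorted: "interlacing rs bs \<Longrightarrow> sorted rs \<and> sorted bs"
proof (induction rs bs rule: interlacing.induct)
  case (1 r r' rs b bs)
  thus ?case using interlacing_hd_le[of "r' # rs" bs] by (auto intro: order_trans)
qed auto

lemma interlacing_count:
  "interlacing rs bs \<Longrightarrow> count (mset rs) x \<le> Suc (count (mset bs) x)"
proof (induction rs bs rule: interlacing.induct)
  case (1 r r' rs b bs)
  have il: "r \<le> b" "b \<le> r'" "interlacing (r' # rs) bs" using "1.prems" by auto
  have "count (mset (r' # rs)) x = 0" if "x < r'"
    using that interlacing_hd_le[OF il(3)] by fastforce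
  thus ?case using 1 il
    by (cases "x = r"; cases "x = r'") (auto simp: count_mset_0_iff[THEN iffD2])
qed auto

(* In each gap of rs: the repeated root itself, or an interior point where Rolle's theorem gives a
   critical point. *)
fun rolle_points :: "'a::order list \<Rightarrow> 'a list \<Rightarrow> bool" where
  "rolle_points (r # r' # rs) (s # ss) \<longleftrightarrow>
     (r = r' \<and> s = r \<or> r < s \<and> s < r') \<and> rolle_points (r' # rs) ss"
| "rolle_points [r] [] \<longleftrightarrow> True"
| "rolle_points _ _ \<longleftrightarrow> False"

lemma interlacing_if_rolle_points: "rolle_points rs ss \<Longrightarrow> interlacing rs ss"
  by (induction rs ss rule: rolle_points.induct) auto

lemma rolle_points_count:
  assumes "rolle_points rs ss"
  shows "if x \<in> set rs then Suc (count (mset ss) x) \<le> count (mset rs) x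
         else count (mset ss) x \<le> 1"
  using assms
proof (induction rs ss rule: rolle_points.induct)
  case (1 r r' rs s ss)
  have "interlacing (r' # rs) ss"
    using "1.prems" by (auto intro: interlacing_if_rolle_points)
  hence "count (mset (r' # rs)) y = 0" "count (mset ss) y = 0" if "y < r'" for y
    using that interlacing_hd_le[of "r' # rs" ss] by fastforce+
  moreover have "r \<le> r'" using "1.prems" by auto
  ultimately show ?case using 1
    by (cases "x = r"; cases "x = s"; cases "r = r'")
      (auto simp: count_mset_0_iff[THEN iffD2] split: if_splits)
qed auto

lemma ex_rolle_points:
  fixes f :: "real poly"
  assumes "sorted rs" and "rs \<noteq> []" and "\<forall>r\<in>set rs. poly f r = 0"
  shows "\<exists>ss. rolle_points rs ss \<and> (\<forall>s\<in>set ss. s \<in> set rs \<or> poly (pderiv f) s = 0)"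
  using assms
proof (induction rs rule: induct_list012)
  case (3 r r' rs)
  then obtain ss where ss: "rolle_points (r' # rs) ss"
    and crit: "\<forall>s\<in>set ss. s \<in> set (r' # rs) \<or> poly (pderiv f) s = 0"
    by auto
  obtain s where "r = r' \<and> s = r \<or> r < s \<and> s < r' \<and> poly (pderiv f) s = 0"
  proof (cases "r = r'")
    case False
    with "3.prems" have "r < r'" by auto
    then obtain s where "r < s" "s < r'" "poly f r' - poly f r = (r' - r) * poly (pderiv f) s"
      using poly_MVT by blast
    moreover have "poly f r = 0" "poly f r' = 0" using "3.prems" by auto
    ultimately show ?thesis using that by auto
  qed (use that in blast)
  hence "rolle_points (r # r' # rs) (s # ss) \<and>
    (\<forall>s'\<in>set (s # ss). s' \<in> set (r # r' # rs) \<or> poly (pderiv f) s' = 0)"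
    using ss crit by auto
  thus ?case by blast
qed (auto intro!: exI[of _ "[]"])

lemma rolle_points_subseteq_proots_pderiv:
  fixes f :: "'a::linordered_idom poly"
  assumes "proots f = mset rs" and "f \<noteq> 0" and "pderiv f \<noteq> 0"
    and "rolle_points rs ss" and "\<forall>s\<in>set ss. s \<in> set rs \<or> poly (pderiv f) s = 0"
  shows "mset ss \<subseteq># proots (pderiv f)"
proof (rule mset_subset_eqI)
  fix x
  show "count (mset ss) x \<le> count (proots (pderiv f)) x"
  proof (cases "x \<in> set rs")
    case True
    hence "poly f x = 0" using assms(1,2) by (metis set_count_proots mem_Collect_eq set_mset_mset)
    have "Suc (count (mset ss) x) \<le> count (mset rs) x"
      using rolle_points_count[OF assms(4), of x] True by simp
    also have "\<dots> = Suc (order x (pderiv f))"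
      using assms(1,2) order_pderiv[OF assms(2) \<open>poly f x = 0\<close>] by (metis count_proots)
    finally show ?thesis using assms(3) by simp
  next
    case False
    hence "count (mset ss) x \<le> 1" using rolle_points_count[OF assms(4), of x] by simp
    show ?thesis
    proof (cases "x \<in> set ss")
      case True
      with False assms(5) have "poly (pderiv f) x = 0" by blast
      hence "order x (pderiv f) \<noteq> 0" using assms(3) by (simp add: order_root)
      with \<open>count (mset ss) x \<le> 1\<close> show ?thesis using assms(3) by simp
    qed (simp add: count_mset_0_iff[THEN iffD2])
  qed
qed

lemma interlacing_if_real_split:
  fixes f :: "real poly"
  assumes f: "f = smult c (\<Prod>r\<leftarrow>rs. [:-r, 1:])" "c \<noteq> 0" "sorted rs"
    and f': "pderiv f = smult d (\<Prod>b\<leftarrow>bs. [:-b, 1:])" "d \<noteq> 0" "sorted bs"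
  shows "interlacing rs bs"
proof -
  have "f \<noteq> 0" and "pderiv f \<noteq> 0" using f f' by (auto simp: prod_linear_nonzero)
  have proots_f: "proots f = mset rs" and proots_f': "proots (pderiv f) = mset bs"
    using f f' by (simp_all add: proots_prod_linear)
  hence "rs \<noteq> []" using \<open>pderiv f \<noteq> 0\<close> f by auto
  moreover have "\<forall>r\<in>set rs. poly f r = 0" using f by (simp add: poly_prod_linear prod_list_zero_iff)
  ultimately obtain ss where ss: "rolle_points rs ss"
    and crit: "\<forall>s\<in>set ss. s \<in> set rs \<or> poly (pderiv f) s = 0"
    using ex_rolle_points f(3) by blast
  txt \<open>Counted with the multiplicity lost by differentiation, the Rolle points already fill up
    all deg f - 1 roots of f', so they are the critical points.\<close>
  have "mset ss \<subseteq># mset bs"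
    using rolle_points_subseteq_proots_pderiv[OF proots_f \<open>f \<noteq> 0\<close> \<open>pderiv f \<noteq> 0\<close> ss crit]
    by (simp add: proots_f')
  moreover have "length bs = length rs - 1"
    using degree_pderiv[of f] f f' by (simp add: degree_prod_linear)
  hence "length ss = length bs" using interlacing_length[OF interlacing_if_rolle_points[OF ss]] by simp
  ultimately have "mset ss = mset bs"
    by (metis mset_subset_size size_mset subset_mset.le_imp_less_or_eq less_irrefl)
  hence "ss = bs"
    using interlacing_sorted[OF interlacing_if_rolle_points[OF ss]] f'(3)
    by (metis properties_for_sort sorted_sort_id)
  thus ?thesis using interlacing_if_rolle_points[OF ss] by simp
qed

lemma real_split_if_interlacing_roots:
  fixes f :: "real poly"
  assumes "interlacing rs bs" and "\<forall>r\<in>set rs. poly f r = 0"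
    and "pderiv f = smult d (\<Prod>b\<leftarrow>bs. [:-b, 1:])" "d \<noteq> 0" and "degree f = length rs"
  shows "f = smult (lead_coeff f) (\<Prod>r\<leftarrow>rs. [:-r, 1:])"
proof (rule eq_smult_prod_linear)
  have "pderiv f \<noteq> 0" using assms(3,4) by (simp add: prod_linear_nonzero)
  hence "f \<noteq> 0" by auto
  show "mset rs \<subseteq># proots f"
  proof (rule mset_subset_eqI)
    fix x
    show "count (mset rs) x \<le> count (proots f) x"
    proof (cases "poly f x = 0")
      case True
      have "count (mset rs) x \<le> Suc (count (mset bs) x)"
        by (rule interlacing_count[OF assms(1)])
      also have "\<dots> = Suc (order x (pderiv f))"
        using assms(3,4) \<open>pderiv f \<noteq> 0\<close> by (simp add: proots_prod_linear flip: count_proots)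
      also have "\<dots> = count (proots f) x" using order_pderiv[OF \<open>f \<noteq> 0\<close> True] \<open>f \<noteq> 0\<close> by simp
      finally show ?thesis .
    next
      case False
      with assms(2) have "x \<notin> set rs" by auto
      thus ?thesis by (simp add: count_mset_0_iff[THEN iffD2])
    qed
  qed
qed (fact assms(5))

section \<open>Monic quintics with real critical points\<close>

lemma poly_root_between:
  fixes p :: "real poly"
  assumes "a \<le> b" and "poly p a * poly p b \<le> 0"
  obtains x where "a \<le> x" "x \<le> b" "poly p x = 0"
proof (cases "poly p a * poly p b = 0")
  case False
  with assms have "a < b" "poly p a * poly p b < 0" by (auto simp: order.order_iff_strict)
  thus ?thesis using poly_IVT that by (meson less_imp_le)
qed (use that assms in auto)

lemma poly_neg_below_if_pderiv_ge_1:
  fixes f :: "real poly"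
  assumes "\<And>\<xi>. \<xi> \<le> m \<Longrightarrow> 1 \<le> poly (pderiv f) \<xi>"
  obtains x where "x \<le> m" and "poly f x < 0"
proof -
  define x where "x = m - \<bar>poly f m\<bar> - 1"
  have "x < m" by (simp add: x_def)
  then obtain \<xi> where "x < \<xi>" "\<xi> < m" and mvt: "poly f m - poly f x = (m - x) * poly (pderiv f) \<xi>"
    using poly_MVT by blast
  have "m - x \<le> (m - x) * poly (pderiv f) \<xi>"
    using assms[of \<xi>] \<open>x < m\<close> \<open>\<xi> < m\<close> by simp
  hence "poly f x < 0" using mvt by (simp add: x_def)
  with \<open>x < m\<close> show ?thesis by (intro that) simp_all
qed

lemma poly_pos_above_if_pderiv_ge_1:
  fixes f :: "real poly"
  assumes "\<And>\<xi>. m \<le> \<xi> \<Longrightarrow> 1 \<le> poly (pderiv f) \<xi>"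
  obtains x where "m \<le> x" and "0 < poly f x"
proof -
  define x where "x = m + \<bar>poly f m\<bar> + 1"
  have "m < x" by (simp add: x_def)
  then obtain \<xi> where "m < \<xi>" "\<xi> < x" and mvt: "poly f x - poly f m = (x - m) * poly (pderiv f) \<xi>"
    using poly_MVT by blast
  have "x - m \<le> (x - m) * poly (pderiv f) \<xi>"
    using assms[of \<xi>] \<open>m < x\<close> \<open>m < \<xi>\<close> by simp
  hence "0 < poly f x" using mvt by (simp add: x_def)
  with \<open>m < x\<close> show ?thesis by (intro that) simp_all
qed

lemma quintic_signs_if_interlacing:
  fixes \<beta>1 \<beta>2 \<beta>3 \<beta>4 :: real
  assumes "interlacing rs [\<beta>4, \<beta>3, \<beta>2, \<beta>1]" and "f = (\<Prod>r\<leftarrow>rs. [:-r, 1:])"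
  shows "0 \<le> poly f \<beta>4 \<and> poly f \<beta>3 \<le> 0 \<and> 0 \<le> poly f \<beta>2 \<and> poly f \<beta>1 \<le> 0"
proof -
  obtain r5 r4 r3 r2 r1 where rs: "rs = [r5, r4, r3, r2, r1]"
    using interlacing_length[OF assms(1)] by (auto simp: numeral_eq_Suc length_Suc_conv)
  have il: "r5 \<le> \<beta>4" "\<beta>4 \<le> r4" "r4 \<le> \<beta>3" "\<beta>3 \<le> r3" "r3 \<le> \<beta>2" "\<beta>2 \<le> r2" "r2 \<le> \<beta>1" "\<beta>1 \<le> r1"
    using assms(1) unfolding rs by auto
  have f: "poly f x = (x - r5) * ((x - r4) * (x - r3)) * ((x - r2) * (x - r1))" for x
    unfolding assms(2) rs poly_prod_linear by (simp add: mult_ac)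
  show ?thesis using il unfolding f by (simp add: zero_le_mult_iff mult_le_0_iff)
qed

locale monic_quintic_with_critical_points =
  fixes f :: "real poly" and \<beta>1 \<beta>2 \<beta>3 \<beta>4 :: real
  assumes degree_f: "degree f = 5" and monic_f: "lead_coeff f = 1"
    and pderiv_f: "pderiv f = smult 5 (\<Prod>b\<leftarrow>[\<beta>4, \<beta>3, \<beta>2, \<beta>1]. [:-b, 1:])"
    and critical_sorted: "\<beta>4 \<le> \<beta>3" "\<beta>3 \<le> \<beta>2" "\<beta>2 \<le> \<beta>1"
begin

lemma sorted_critical_points: "sorted [\<beta>4, \<beta>3, \<beta>2, \<beta>1]"
  using critical_sorted by auto

lemma poly_pderiv_f: "poly (pderiv f) x = 5 * ((\<beta>4 - x) * (\<beta>3 - x) * ((\<beta>2 - x) * (\<beta>1 - x)))"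
  by (simp add: pderiv_f poly_prod_linear algebra_simps)

lemma pderiv_pos_below: "x < \<beta>4 \<Longrightarrow> 0 < poly (pderiv f) x"
  using critical_sorted by (simp add: poly_pderiv_f)

lemma pderiv_ge_1_outside: "x \<le> \<beta>4 - 1 \<or> \<beta>1 + 1 \<le> x \<Longrightarrow> 1 \<le> poly (pderiv f) x"
proof -
  have ge_1: "1 \<le> a * b" if "1 \<le> a" "1 \<le> b" for a b :: real
    using mult_mono[of 1 a 1 b] that by simp
  assume "x \<le> \<beta>4 - 1 \<or> \<beta>1 + 1 \<le> x"
  hence "1 \<le> (\<beta>4 - x) * (\<beta>3 - x) * ((\<beta>2 - x) * (\<beta>1 - x))"
  proof
    assume "x \<le> \<beta>4 - 1"
    thus ?thesis using critical_sorted by (intro ge_1) auto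
  next
    assume "\<beta>1 + 1 \<le> x"
    hence "1 \<le> (x - \<beta>4) * (x - \<beta>3) * ((x - \<beta>2) * (x - \<beta>1))"
      using critical_sorted by (intro ge_1) auto
    thus ?thesis by (simp add: algebra_simps)
  qed
  thus ?thesis by (simp add: poly_pderiv_f)
qed

lemma strict_mono_below:
  assumes "r < t" and "t \<le> \<beta>4"
  shows "poly f r < poly f t"
proof -
  obtain \<xi> where "\<xi> < t" and mvt: "poly f t - poly f r = (t - r) * poly (pderiv f) \<xi>"
    using poly_MVT[OF assms(1)] by blast
  have "0 < (t - r) * poly (pderiv f) \<xi>"
    using assms \<open>\<xi> < t\<close> pderiv_pos_below by simp
  thus ?thesis using mvt by simp
qed

lemma interlacing_split_if_signs:
  assumes "0 \<le> poly f \<beta>4" "poly f \<beta>3 \<le> 0" "0 \<le> poly f \<beta>2" "poly f \<beta>1 \<le> 0"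
  obtains rs where "interlacing rs [\<beta>4, \<beta>3, \<beta>2, \<beta>1]" and "f = (\<Prod>r\<leftarrow>rs. [:-r, 1:])"
proof -
  obtain x0 where "x0 \<le> \<beta>4 - 1" "poly f x0 < 0"
    using poly_neg_below_if_pderiv_ge_1 pderiv_ge_1_outside by blast
  obtain x1 where "\<beta>1 + 1 \<le> x1" "0 < poly f x1"
    using poly_pos_above_if_pderiv_ge_1 pderiv_ge_1_outside by blast
  note signs = assms \<open>poly f x0 < 0\<close> \<open>0 < poly f x1\<close>
  obtain r5 where "x0 \<le> r5" "r5 \<le> \<beta>4" "poly f r5 = 0"
    by (rule poly_root_between[of x0 \<beta>4 f])
      (use signs \<open>x0 \<le> \<beta>4 - 1\<close> in \<open>auto simp: mult_le_0_iff\<close>)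
  obtain r4 where "\<beta>4 \<le> r4" "r4 \<le> \<beta>3" "poly f r4 = 0"
    by (rule poly_root_between[of \<beta>4 \<beta>3 f])
      (use signs critical_sorted in \<open>auto simp: mult_le_0_iff\<close>)
  obtain r3 where "\<beta>3 \<le> r3" "r3 \<le> \<beta>2" "poly f r3 = 0"
    by (rule poly_root_between[of \<beta>3 \<beta>2 f])
      (use signs critical_sorted in \<open>auto simp: mult_le_0_iff\<close>)
  obtain r2 where "\<beta>2 \<le> r2" "r2 \<le> \<beta>1" "poly f r2 = 0"
    by (rule poly_root_between[of \<beta>2 \<beta>1 f])
      (use signs critical_sorted in \<open>auto simp: mult_le_0_iff\<close>)
  obtain r1 where "\<beta>1 \<le> r1" "r1 \<le> x1" "poly f r1 = 0"
    by (rule poly_root_between[of \<beta>1 x1 f])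
      (use signs \<open>\<beta>1 + 1 \<le> x1\<close> in \<open>auto simp: mult_le_0_iff\<close>)
  have il: "interlacing [r5, r4, r3, r2, r1] [\<beta>4, \<beta>3, \<beta>2, \<beta>1]"
    using \<open>r5 \<le> \<beta>4\<close> \<open>\<beta>4 \<le> r4\<close> \<open>r4 \<le> \<beta>3\<close> \<open>\<beta>3 \<le> r3\<close> \<open>r3 \<le> \<beta>2\<close> \<open>\<beta>2 \<le> r2\<close> \<open>r2 \<le> \<beta>1\<close> \<open>\<beta>1 \<le> r1\<close>
    by simp
  have "f = smult (lead_coeff f) (\<Prod>r\<leftarrow>[r5, r4, r3, r2, r1]. [:-r, 1:])"
    by (rule real_split_if_interlacing_roots[OF il _ pderiv_f])
      (use \<open>poly f r5 = 0\<close> \<open>poly f r4 = 0\<close> \<open>poly f r3 = 0\<close> \<open>poly f r2 = 0\<close> \<open>poly f r1 = 0\<close>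
        degree_f in auto)
  with il monic_f show ?thesis by (metis that smult_1_left)
qed

lemma complex_roots_iff:
  "(\<forall>z. poly (map_poly complex_of_real f) z = 0 \<longrightarrow> z \<in> \<real> \<and> P (Re z)) \<longleftrightarrow>
   (\<exists>rs. interlacing rs [\<beta>4, \<beta>3, \<beta>2, \<beta>1] \<and> f = (\<Prod>r\<leftarrow>rs. [:-r, 1:]) \<and> (\<forall>r\<in>set rs. P r))"
proof
  assume roots: "\<forall>z. poly (map_poly complex_of_real f) z = 0 \<longrightarrow> z \<in> \<real> \<and> P (Re z)"
  then obtain rs where "sorted rs" and "f = smult (lead_coeff f) (\<Prod>r\<leftarrow>rs. [:-r, 1:])"
    using real_split_if_complex_roots_real by blast
  hence f: "f = (\<Prod>r\<leftarrow>rs. [:-r, 1:])" using monic_f by simp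
  have "interlacing rs [\<beta>4, \<beta>3, \<beta>2, \<beta>1]"
    by (rule interlacing_if_real_split[of f 1 rs, OF _ _ \<open>sorted rs\<close> pderiv_f])
      (use sorted_critical_points in \<open>simp_all add: f\<close>)
  moreover have "\<forall>r\<in>set rs. P r"
    using roots complex_roots_of_real_split[of f 1 rs] f by force
  ultimately show "\<exists>rs. interlacing rs [\<beta>4, \<beta>3, \<beta>2, \<beta>1] \<and> f = (\<Prod>r\<leftarrow>rs. [:-r, 1:]) \<and>
    (\<forall>r\<in>set rs. P r)" using f by blast
next
  assume "\<exists>rs. interlacing rs [\<beta>4, \<beta>3, \<beta>2, \<beta>1] \<and> f = (\<Prod>r\<leftarrow>rs. [:-r, 1:]) \<and>
    (\<forall>r\<in>set rs. P r)"
  then obtain rs where "f = (\<Prod>r\<leftarrow>rs. [:-r, 1:])" "\<forall>r\<in>set rs. P r" by blast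
  thus "\<forall>z. poly (map_poly complex_of_real f) z = 0 \<longrightarrow> z \<in> \<real> \<and> P (Re z)"
    using complex_roots_of_real_split[of f 1 rs] by auto
qed

lemma complex_critical_points_iff:
  "(\<forall>z. poly (pderiv (map_poly complex_of_real f)) z = 0 \<longrightarrow> z \<in> \<real> \<and> P (Re z)) \<longleftrightarrow>
   P \<beta>4 \<and> P \<beta>3 \<and> P \<beta>2 \<and> P \<beta>1"
  using complex_roots_of_real_split[OF pderiv_f] by (auto simp: pderiv_map_poly_of_real)

lemma least_root_sign_iff:
  assumes "interlacing rs [\<beta>4, \<beta>3, \<beta>2, \<beta>1]" and f: "f = (\<Prod>r\<leftarrow>rs. [:-r, 1:])"
  shows "(\<forall>r\<in>set rs. 0 \<le> r) \<longleftrightarrow> 0 \<le> \<beta>4 \<and> poly f 0 \<le> 0"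
    and "(\<forall>r\<in>set rs. 0 < r) \<longleftrightarrow> 0 < \<beta>4 \<and> poly f 0 < 0"
proof -
  obtain r5 r4 r3 r2 r1 where rs: "rs = [r5, r4, r3, r2, r1]"
    using interlacing_length[OF assms(1)] by (auto simp: numeral_eq_Suc length_Suc_conv)
  have il: "r5 \<le> \<beta>4" "\<beta>4 \<le> r4" "r4 \<le> \<beta>3" "\<beta>3 \<le> r3" "r3 \<le> \<beta>2" "\<beta>2 \<le> r2" "r2 \<le> \<beta>1" "\<beta>1 \<le> r1"
    using assms(1) unfolding rs by auto
  have f0: "poly f 0 = - (r5 * r4 * r3 * r2 * r1)"
    unfolding f rs poly_prod_linear by simp
  have "poly f r5 = 0" unfolding f rs poly_prod_linear by simp
  hence r5: "0 \<le> r5" if "0 \<le> \<beta>4" "poly f 0 \<le> 0"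
    using strict_mono_below[of r5 0] that by force
  show "(\<forall>r\<in>set rs. 0 \<le> r) \<longleftrightarrow> 0 \<le> \<beta>4 \<and> poly f 0 \<le> 0"
    using il r5 unfolding f0 rs by (auto simp: zero_le_mult_iff)
  show "(\<forall>r\<in>set rs. 0 < r) \<longleftrightarrow> 0 < \<beta>4 \<and> poly f 0 < 0"
    using il r5 \<open>poly f r5 = 0\<close> unfolding f0 rs by (auto simp: zero_less_mult_iff)
qed

lemma complex_roots_nonneg_iff:
  "(\<forall>z. poly (map_poly complex_of_real f) z = 0 \<longrightarrow> z \<in> \<real> \<and> 0 \<le> Re z) \<longleftrightarrow>
   0 \<le> \<beta>4 \<and> poly f 0 \<le> 0 \<and>
   0 \<le> poly f \<beta>4 \<and> poly f \<beta>3 \<le> 0 \<and> 0 \<le> poly f \<beta>2 \<and> poly f \<beta>1 \<le> 0"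
  unfolding complex_roots_iff
  by (metis interlacing_split_if_signs quintic_signs_if_interlacing least_root_sign_iff(1))

lemma complex_roots_pos_iff:
  "(\<forall>z. poly (map_poly complex_of_real f) z = 0 \<longrightarrow> z \<in> \<real> \<and> 0 < Re z) \<longleftrightarrow>
   0 < \<beta>4 \<and> poly f 0 < 0 \<and>
   0 \<le> poly f \<beta>4 \<and> poly f \<beta>3 \<le> 0 \<and> 0 \<le> poly f \<beta>2 \<and> poly f \<beta>1 \<le> 0"
  unfolding complex_roots_iff
  by (metis interlacing_split_if_signs quintic_signs_if_interlacing least_root_sign_iff(2))

end

theorem proposition3p6:
  fixes a4 a3 a2 a1 a0 :: real
  defines "f \<equiv> quintic a4 a3 a2 a1 a0"
  shows
    "(\<forall>x. root_formula_choice a4 a3 a2 a1 x \<longrightarrow>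
        pderiv (map_poly complex_of_real f) =
          smult 5 (\<Prod>p\<in>{1,-1::real}\<times>{1,-1::real}.
                     [:- (x (fst p) (snd p) - complex_of_real (a4 / 5)), 1:]))
     \<and>
     (\<forall>\<beta>1 \<beta>2 \<beta>3 \<beta>4 :: real.
        pderiv f = smult 5 ([:-\<beta>1, 1:] * [:-\<beta>2, 1:] * [:-\<beta>3, 1:] * [:-\<beta>4, 1:]) \<and>
        \<beta>4 \<le> \<beta>3 \<and> \<beta>3 \<le> \<beta>2 \<and> \<beta>2 \<le> \<beta>1 \<longrightarrow>
        (let F = Fq a4 a3 a2 a1;
             lam1 = max (F \<beta>1) (F \<beta>3);
             lam2 = min (F \<beta>2) (F \<beta>4);
             cond = (- lam2 \<le> a0 \<and> a0 \<le> - lam1) in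
         ((\<forall>z. poly (map_poly complex_of_real f) z = 0 \<longrightarrow> z \<in> \<real> \<and> 0 \<le> Re z) \<longleftrightarrow>
            (\<forall>z. poly (pderiv (map_poly complex_of_real f)) z = 0 \<longrightarrow> z \<in> \<real> \<and> 0 \<le> Re z)
            \<and> a0 \<le> 0 \<and> cond)
         \<and>
         ((\<forall>z. poly (map_poly complex_of_real f) z = 0 \<longrightarrow> z \<in> \<real> \<and> 0 < Re z) \<longleftrightarrow>
            (\<forall>z. poly (pderiv (map_poly complex_of_real f)) z = 0 \<longrightarrow> z \<in> \<real> \<and> 0 < Re z)
            \<and> a0 < 0 \<and> cond)))"
  apply (intro conjI allI impI)
  subgoal for x
    unfolding f_def by (rule pderiv_quintic_root_formula)
  subgoal premises critical for \<beta>1 \<beta>2 \<beta>3 \<beta>4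
  proof -
    interpret monic_quintic_with_critical_points f \<beta>1 \<beta>2 \<beta>3 \<beta>4
    proof unfold_locales
      show "degree f = 5" "lead_coeff f = 1" by (simp_all add: f_def quintic_def)
      show "pderiv f = smult 5 (\<Prod>b\<leftarrow>[\<beta>4, \<beta>3, \<beta>2, \<beta>1]. [:-b, 1:])"
        using critical by (simp del: mult_pCons_left add: mult_ac)
    qed (use critical in auto)
    have "poly f x = Fq a4 a3 a2 a1 x + a0" for x
      by (simp add: f_def quintic_def Fq_def algebra_simps eval_nat_numeral)
    moreover have "Fq a4 a3 a2 a1 0 = 0" by (simp add: Fq_def)
    ultimately show ?thesis
      unfolding Let_def complex_roots_nonneg_iff complex_roots_pos_iff
        complex_critical_points_iff[of "\<lambda>x. 0 \<le> x"] complex_critical_points_iff[of "\<lambda>x. 0 < x"]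
      using critical_sorted by (auto simp: min_def max_def)
  qed
  done

end
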